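(* Let $n\in\mathbb N$, $d\in(0,n)$, and let $S\subset\mathbb R^n$ be the intersection of an open set and a closed set. Let $(S_\lambda)_{\lambda\in\Lambda}$ be a family of relatively open subsets of $S$ with $S=\bigcup_{\lambda\in\Lambda}S_\lambda$. Suppose that for every $\lambda\in\Lambda$ the $d$-dimensional Minkowski content measure on $S_\lambda$ exists. Then the $d$-dimensional Minkowski content measure on $S$ exists.
   Context: For $A\subset\mathbb R^n$ and $r>0$ let $A^r=\{x\in\mathbb R^n:\operatorname{dist}(x,A)<r\}$ and let $\lambda^n$ be Lebesgue measure. The $d$-dimensional Minkowski content of $A$ is $\mathrm{Cont}_d(A)=\lim_{r\to0^+}r^{d-n}\lambda^n(A^r)$ when the limit exists. For $S\subset\mathbb R^n$ which is the intersection of an open set and a closed set, a $d$-dimensional Minkowski content measure on $S$ is a Borel measure $\mu$ on $S$ such that for every compact $K\subset S$: (i) $\mu(K)<\infty$; and (ii) whenever $\mu(\partial_S K)=0$ (where $\partial_S K$ is the relative boundary of $K$ in $S$), $\mathrm{Cont}_d(K)$ exists and equals $\mu(K)$. *)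

theory Defs
  imports "HOL-Analysis.Analysis"
begin

definition nbhd :: "'a::euclidean_space set \<Rightarrow> real \<Rightarrow> 'a set" where
  "nbhd A r = {x. \<exists>a\<in>A. dist x a < r}"

definition has_minkowski_content :: "real \<Rightarrow> 'a::euclidean_space set \<Rightarrow> real \<Rightarrow> bool" where
  "has_minkowski_content d A c \<longleftrightarrow>
     ((\<lambda>r. r powr (d - real DIM('a)) * measure lebesgue (nbhd A r)) \<longlongrightarrow> c) (at_right 0)"

definition minkowski_content_measure :: "real \<Rightarrow> 'a::euclidean_space set \<Rightarrow> 'a measure \<Rightarrow> bool" where
  "minkowski_content_measure d S M \<longleftrightarrow>
     space M = S \<and> sets M = sets (restrict_space borel S) \<and>
     (\<forall>K. compact K \<and> K \<subseteq> S \<longrightarrow>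
        emeasure M K < \<infinity> \<and>
        (emeasure M ((top_of_set S) frontier_of K) = 0 \<longrightarrow>
           has_minkowski_content d K (measure M K)))"

end

theory Submission
  imports Defs
begin

text \<open>
  Minkowski content measures are unique where they exist: on a relatively open set \<open>T\<close>,
  the compact sets whose relative frontiers are null for two such measures form an
  \<open>\<inter>\<close>-stable generator of the Borel sets of \<open>T\<close> (small balls whose radii avoid the
  countably many spheres of positive mass), and both measures equal the Minkowski content
  there. So the measures on a countable subcover agree on overlaps and glue to a Borel
  measure on \<open>S\<close>, which has the defining property on small balls. A general compact \<open>K\<close>
  with null frontier is cut into finitely many small compact pieces with null frontiers,
  disjoint except for thin annuli of small measure; Minkowski contents of disjoint compact
  sets add up because their \<open>r\<close>-neighbourhoods become disjoint for small \<open>r\<close>.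
\<close>

section \<open>Relative frontiers and countable covers\<close>

lemma frontier_of_top_of_set_subset: "(top_of_set S) frontier_of A \<subseteq> frontier A"
  using frontier_of_subtopology_subset[of S euclidean A]
    frontier_of_subset_subtopology[of euclidean S A] by auto

lemma frontier_of_Int_closed_subset:
  assumes "closedin (top_of_set S) (A \<inter> F)"
  shows "(top_of_set S) frontier_of (A \<inter> F) \<subseteq> A \<inter> F \<inter> ((top_of_set S) frontier_of A \<union> frontier F)"
  using frontier_of_Int_subset[of "top_of_set S" A F] frontier_of_top_of_set_subset[of S F]
    frontier_of_subset_closedin[OF assms] by blast

lemma frontier_of_openin_Int_subset:
  assumes "openin (top_of_set S) W" "closedin (top_of_set S) (W \<inter> F)"
  shows "(top_of_set S) frontier_of (W \<inter> F) \<subseteq> W \<inter> F \<inter> frontier F"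
  using frontier_of_Int_closed_subset[OF assms(2)] frontier_of_openin[OF assms(1)] by auto

lemma frontier_INT_subset: "finite I \<Longrightarrow> frontier (\<Inter>i\<in>I. A i) \<subseteq> (\<Union>i\<in>I. frontier (A i))"
proof (induction I rule: finite_induct)
  case (insert i I)
  then show ?case using frontier_Int_subset[of "A i" "\<Inter>i\<in>I. A i"] by auto
qed simp

lemma closedin_compact_subset:
  fixes K :: "'a::t2_space set"
  shows "compact K \<Longrightarrow> K \<subseteq> S \<Longrightarrow> closedin (top_of_set S) K"
  by (metis closed_subset compact_imp_closed)

lemma frontier_of_compact_subset:
  fixes K :: "'a::t2_space set"
  assumes "compact K" "K \<subseteq> S"
  shows "(top_of_set S) frontier_of K \<subseteq> K" "compact ((top_of_set S) frontier_of K)"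
proof -
  show sub: "(top_of_set S) frontier_of K \<subseteq> K"
    using assms by (simp add: closedin_compact_subset frontier_of_subset_closedin)
  obtain F where "closed F" "(top_of_set S) frontier_of K = S \<inter> F"
    using closedin_frontier_of[of "top_of_set S" K] by (auto simp: closedin_closed)
  with sub assms have "(top_of_set S) frontier_of K = K \<inter> F" by blast
  with \<open>closed F\<close> show "compact ((top_of_set S) frontier_of K)"
    using assms(1) by (simp add: compact_Int_closed)
qed

lemma frontier_of_subtopology_openin_eq:
  fixes K :: "'a::t2_space set"
  assumes "openin (top_of_set S) T" "compact K" "K \<subseteq> T"
  shows "(top_of_set T) frontier_of K = (top_of_set S) frontier_of K"
proof -
  have "T \<subseteq> S" using assms(1) by (rule openin_imp_subset)
  then have "(top_of_set T) frontier_of K = T \<inter> (top_of_set S) frontier_of K"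
    using assms(1) by (simp add: subtopology_subtopology inf.absorb2 frontier_of_subtopology_open[symmetric])
  then show ?thesis
    using assms frontier_of_compact_subset(1)[of K S] \<open>T \<subseteq> S\<close> by auto
qed

lemma frontier_ball_subset_sphere: "frontier (ball a e) \<subseteq> sphere a e"
  for a :: "'a::real_normed_vector"
  by (cases "0 < e") (auto simp: ball_empty)

lemma frontier_cball_Int_Compl_balls_subset:
  fixes a :: "'a::euclidean_space"
  assumes "finite J"
  shows "frontier (cball a r \<inter> (\<Inter>j\<in>J. - ball (c j) (t j))) \<subseteq> sphere a r \<union> (\<Union>j\<in>J. sphere (c j) (t j))"
proof -
  have "frontier (\<Inter>j\<in>J. - ball (c j) (t j)) \<subseteq> (\<Union>j\<in>J. sphere (c j) (t j))"
    using frontier_INT_subset[OF assms, of "\<lambda>j. - ball (c j) (t j)"] frontier_ball_subset_sphere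
    by fastforce
  then show ?thesis
    using frontier_Int_subset[of "cball a r"] by auto
qed

lemma frontier_annulus_subset: "frontier (cball a t - ball a r) \<subseteq> sphere a t \<union> sphere a r"
  for a :: "'a::euclidean_space"
  using frontier_Int_subset[of "cball a t" "- ball a r"] frontier_ball_subset_sphere[of a r]
  by (auto simp: Diff_eq)

lemma locally_compact_imp_borel:
  fixes S :: "'a::euclidean_space set"
  assumes "locally compact S"
  shows "S \<in> sets borel"
proof -
  obtain C U where "closed C" "open U" "S = C \<inter> U"
    using assms by (auto simp: locally_compact_closed_Int_open)
  then show ?thesis by (simp add: borel_open borel_closed sets.Int)
qed

lemma countable_subfamily_openin_Union:
  fixes T :: "'i \<Rightarrow> 'a::second_countable_topology set"
  assumes "\<And>i. i \<in> I \<Longrightarrow> openin (top_of_set S) (T i)"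
  obtains J where "J \<subseteq> I" "countable J" "(\<Union>i\<in>J. T i) = (\<Union>i\<in>I. T i)"
proof -
  obtain \<F> where \<F>: "\<F> \<subseteq> T ` I" "countable \<F>" "\<Union>\<F> = (\<Union>i\<in>I. T i)"
    using Lindelof_openin[of "T ` I" S] assms by blast
  then obtain J where "countable J" "J \<subseteq> I" "\<F> = T ` J"
    using countable_subset_image[of \<F> T I] by blast
  with \<F>(3) show ?thesis using that by blast
qed

lemma countable_cover_compact_balls:
  fixes W :: "'a::euclidean_space set"
  assumes W: "locally compact W"
    and good: "\<And>x e. x \<in> W \<Longrightarrow> 0 < e \<Longrightarrow> compact (W \<inter> cball x e) \<Longrightarrow> \<exists>r. 0 < r \<and> r < e \<and> G x r"
  shows "\<exists>\<A>. countable \<A> \<and> (\<forall>A\<in>\<A>. \<exists>x r. A = W \<inter> cball x r \<and> compact A \<and> G x r) \<and> \<Union>\<A> = W"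
proof -
  have "\<exists>r. 0 < r \<and> compact (W \<inter> cball x r) \<and> G x r" if x: "x \<in> W" for x
  proof -
    obtain e where "0 < e" "closed (cball x e \<inter> W)"
      using W \<open>x \<in> W\<close> by (auto simp: locally_compact_Int_cball)
    then have e: "compact (W \<inter> cball x e)"
      by (simp add: compact_eq_bounded_closed bounded_Int Int_commute)
    then obtain r where r: "0 < r" "r < e" "G x r" using good[OF x \<open>0 < e\<close> e] by blast
    have "W \<inter> cball x r = (W \<inter> cball x e) \<inter> cball x r" using r(2) by auto
    then have "compact (W \<inter> cball x r)" using e by (simp add: compact_Int_closed)
    with r show ?thesis by blast
  qed
  then obtain r where r: "\<And>x. x \<in> W \<Longrightarrow> 0 < r x \<and> compact (W \<inter> cball x (r x)) \<and> G x (r x)"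
    by metis
  have "openin (top_of_set W) B" if "B \<in> (\<lambda>x. W \<inter> ball x (r x)) ` W" for B
    using that by (auto simp: openin_open_Int)
  then obtain \<F> where \<F>: "\<F> \<subseteq> (\<lambda>x. W \<inter> ball x (r x)) ` W" "countable \<F>"
      "\<Union>\<F> = (\<Union>x\<in>W. W \<inter> ball x (r x))"
    by (rule Lindelof_openin) blast
  then obtain X where X: "countable X" "X \<subseteq> W" "\<F> = (\<lambda>x. W \<inter> ball x (r x)) ` X"
    using countable_subset_image[of \<F> "\<lambda>x. W \<inter> ball x (r x)" W] by blast
  have "W \<subseteq> (\<Union>x\<in>X. W \<inter> cball x (r x))"
  proof
    fix y assume "y \<in> W"
    then have "y \<in> \<Union>\<F>" using \<F>(3) r by fastforce
    then obtain x where "x \<in> X" "y \<in> W \<inter> ball x (r x)" using X(3) by blast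
    then show "y \<in> (\<Union>x\<in>X. W \<inter> cball x (r x))" by (auto intro!: bexI[of _ x])
  qed
  then have "(\<Union>x\<in>X. W \<inter> cball x (r x)) = W" by blast
  moreover have "\<forall>A\<in>(\<lambda>x. W \<inter> cball x (r x)) ` X. \<exists>x r. A = W \<inter> cball x r \<and> compact A \<and> G x r"
    using r X(2) by blast
  ultimately show ?thesis
    using X(1) by (intro exI[of _ "(\<lambda>x. W \<inter> cball x (r x)) ` X"]) auto
qed

lemma (in finite_measure) countable_positive_level_sets:
  fixes f :: "'a \<Rightarrow> real"
  assumes f: "f \<in> borel_measurable M"
  shows "countable {r. emeasure M (f -` {r} \<inter> space M) \<noteq> 0}"
proof -
  let ?N = "distr M borel f"
  have N: "emeasure ?N {r} = emeasure M (f -` {r} \<inter> space M)" for r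
    using f by (simp add: emeasure_distr)
  interpret N: finite_measure ?N
    using f by (intro finite_measureI) (simp add: emeasure_distr)
  show ?thesis
    using N.countable_support by (simp add: N[symmetric] N.emeasure_eq_measure)
qed

lemma countable_positive_measure_spheres:
  fixes M :: "'a::metric_space measure"
  assumes sets: "sets M = sets (restrict_space borel A)"
    and K: "K \<in> sets M" "emeasure M K < \<infinity>"
  shows "countable {r. emeasure M (K \<inter> sphere x r) \<noteq> 0}"
proof -
  interpret MK: finite_measure "restrict_space M K"
    using K by (intro finite_measureI) (simp add: emeasure_restrict_space)
  have "dist x \<in> borel_measurable (restrict_space borel A)"
    by (intro measurable_restrict_space1 borel_measurable_continuous_onI continuous_intros)
  then have "dist x \<in> borel_measurable M"
    by (subst measurable_cong_sets[OF sets refl])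
  then have "countable {r. emeasure (restrict_space M K) (dist x -` {r} \<inter> space (restrict_space M K)) \<noteq> 0}"
    by (intro MK.countable_positive_level_sets measurable_restrict_space1)
  moreover have "dist x -` {r} \<inter> space (restrict_space M K) = K \<inter> sphere x r" for r
    using sets.sets_into_space[OF K(1)] by (auto simp: space_restrict_space)
  ultimately show ?thesis
    using K(1) by (simp add: emeasure_restrict_space)
qed

lemma ex_between_notin_countable:
  fixes a b :: real
  assumes "a < b" "countable B"
  shows "\<exists>s. a < s \<and> s < b \<and> s \<notin> B"
proof -
  have "\<not> {a<..<b} \<subseteq> B"
    using assms uncountable_open_interval countable_subset by blast
  then show ?thesis by auto
qed

lemma ex_eventually_at_right_notin_countable:
  fixes x :: real
  assumes "eventually P (at_right x)" "countable B"
  shows "\<exists>t>x. P t \<and> t \<notin> B"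
proof -
  obtain b where "b > x" "\<And>t. x < t \<Longrightarrow> t < b \<Longrightarrow> P t"
    using assms(1) by (auto simp: eventually_at_right_field)
  then show ?thesis
    using ex_between_notin_countable[OF \<open>b > x\<close> assms(2)] by blast
qed

lemma sets_restrict_borelI: "X \<in> sets borel \<Longrightarrow> X \<subseteq> A \<Longrightarrow> X \<in> sets (restrict_space borel A)"
  by (auto simp: sets_restrict_space image_iff intro!: bexI[of _ X])

lemma compact_in_sets_restrict_borel:
  fixes P :: "'a::t2_space set"
  shows "sets M = sets (restrict_space borel S) \<Longrightarrow> compact P \<Longrightarrow> P \<subseteq> S \<Longrightarrow> P \<in> sets M"
  by (simp add: borel_compact sets_restrict_borelI)

lemma sets_restrict_space_restrict_borel:
  assumes "sets M = sets (restrict_space borel A)" "T \<subseteq> A"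
  shows "sets (restrict_space M T) = sets (restrict_space borel T)"
proof -
  have "sets (restrict_space M T) = sets (restrict_space (restrict_space borel A) T)"
    using assms(1) by (simp add: sets_restrict_space)
  then show ?thesis
    using assms(2) by (simp add: sets_restrict_restrict_space Int_absorb1)
qed

lemma emeasure_restrict_space_restrict_borel:
  assumes "sets M = sets (restrict_space borel A)" "T \<in> sets borel" "T \<subseteq> A" "Y \<subseteq> T"
  shows "emeasure (restrict_space M T) Y = emeasure M Y"
proof (rule emeasure_restrict_space)
  have "space M = A"
    using sets_eq_imp_space_eq[OF assms(1)] by (simp add: space_restrict_space)
  then show "T \<inter> space M \<in> sets M"
    using assms by (simp add: Int_absorb2 sets_restrict_borelI)
qed (rule assms(4))

lemma sets_restrict_borel_eq_sigma_sets:
  fixes T :: "'a::topological_space set"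
  assumes T: "T \<in> sets borel" and E: "E \<subseteq> sets (restrict_space borel T)"
    and cover: "\<And>V. open V \<Longrightarrow> \<exists>\<A>. countable \<A> \<and> \<A> \<subseteq> E \<and> \<Union>\<A> = T \<inter> V"
  shows "sets (restrict_space borel T) = sigma_sets T E"
proof
  show "sigma_sets T E \<subseteq> sets (restrict_space borel T)"
    using sets.sigma_sets_subset[OF E] by (simp add: space_restrict_space)
  have "sets (restrict_space borel T) = (\<inter>) T ` sigma_sets UNIV {V. open V}"
    by (simp add: sets_restrict_space sets_borel)
  also have "\<dots> = sigma_sets T ((\<inter>) T ` {V. open V})"
    using T by (intro sigma_sets_Int) (auto simp: sets_borel)
  also have "\<dots> \<subseteq> sigma_sets T E"
  proof (rule sigma_sets_mono, rule subsetI)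
    fix Y assume "Y \<in> (\<inter>) T ` {V. open V}"
    then obtain V where V: "open V" "Y = T \<inter> V" by auto
    obtain \<A> where \<A>: "countable \<A>" "\<A> \<subseteq> E" "\<Union>\<A> = T \<inter> V"
      using cover[OF V(1)] by auto
    have "\<Union>\<A> \<in> sigma_sets T E"
      using \<A> by (intro sigma_sets_UNION) auto
    then show "Y \<in> sigma_sets T E" using \<A>(3) V(2) by simp
  qed
  finally show "sets (restrict_space borel T) \<subseteq> sigma_sets T E" .
qed

lemma measure_disjoint_pieces_bounds:
  fixes M :: "'a measure" and A :: "'i \<Rightarrow> 'a set" and B :: "'j \<Rightarrow> 'a set"
  assumes fin: "finite I" "finite J" and disj: "pairwise (\<lambda>i j. disjnt (A i) (A j)) I"
    and sub: "(\<Union>i\<in>I. A i) \<subseteq> X" "X \<subseteq> (\<Union>i\<in>I. A i) \<union> (\<Union>j\<in>J. B j)"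
    and meas: "X \<in> sets M" "\<And>i. i \<in> I \<Longrightarrow> A i \<in> fmeasurable M" "\<And>j. j \<in> J \<Longrightarrow> B j \<in> fmeasurable M"
  shows "(\<Sum>i\<in>I. measure M (A i)) \<le> measure M X"
    and "measure M X \<le> (\<Sum>i\<in>I. measure M (A i)) + (\<Sum>j\<in>J. measure M (B j))"
proof -
  have UA: "(\<Union>i\<in>I. A i) \<in> fmeasurable M" and UB: "(\<Union>j\<in>J. B j) \<in> fmeasurable M"
    using fin meas by (auto intro!: fmeasurable.finite_UN)
  then have X: "X \<in> fmeasurable M"
    using sub(2) meas(1) by (meson fmeasurable.Un fmeasurableI2)
  have sumA: "(\<Sum>i\<in>I. measure M (A i)) = measure M (\<Union>i\<in>I. A i)"
    using measure_UNION'[OF fin(1) meas(2) disj] by simp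
  show "(\<Sum>i\<in>I. measure M (A i)) \<le> measure M X"
    unfolding sumA using sub(1) UA X by (intro measure_mono_fmeasurable) auto
  have "measure M X \<le> measure M ((\<Union>i\<in>I. A i) \<union> (\<Union>j\<in>J. B j))"
    using sub(2) UA UB meas(1) by (intro measure_mono_fmeasurable) auto
  also have "\<dots> \<le> measure M (\<Union>i\<in>I. A i) + measure M (\<Union>j\<in>J. B j)"
    using UA UB by (intro measure_Un_le) auto
  also have "\<dots> \<le> (\<Sum>i\<in>I. measure M (A i)) + (\<Sum>j\<in>J. measure M (B j))"
    unfolding sumA using fin(2) meas(3) by (intro add_left_mono measure_UNION_le) auto
  finally show "measure M X \<le> (\<Sum>i\<in>I. measure M (A i)) + (\<Sum>j\<in>J. measure M (B j))" .
qed

lemma emeasure_compact_less_top: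
  fixes M :: "'a::metric_space measure"
  assumes "compact P"
    and local: "\<And>x. x \<in> P \<Longrightarrow> \<exists>\<rho>>0. P \<inter> cball x \<rho> \<in> sets M \<and> emeasure M (P \<inter> cball x \<rho>) < \<infinity>"
  shows "emeasure M P < \<infinity>"
proof -
  have "\<forall>x\<in>P. \<exists>\<rho>. \<rho> > 0 \<and> P \<inter> cball x \<rho> \<in> sets M \<and> emeasure M (P \<inter> cball x \<rho>) < \<infinity>"
    using local by blast
  from bchoice[OF this] obtain \<rho>
    where \<rho>: "\<forall>x\<in>P. \<rho> x > 0 \<and> P \<inter> cball x (\<rho> x) \<in> sets M \<and> emeasure M (P \<inter> cball x (\<rho> x)) < \<infinity>" ..
  have "P \<subseteq> (\<Union>x\<in>P. ball x (\<rho> x))"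
  proof
    fix x assume "x \<in> P"
    then show "x \<in> (\<Union>x\<in>P. ball x (\<rho> x))" using \<rho> by (intro UN_I[of x]) auto
  qed
  then obtain X where X: "X \<subseteq> P" "finite X" "P \<subseteq> (\<Union>x\<in>X. ball x (\<rho> x))"
    using compactE_image[OF assms(1), of P "\<lambda>x. ball x (\<rho> x)"] by auto
  have cover: "P \<subseteq> (\<Union>x\<in>X. P \<inter> cball x (\<rho> x))"
  proof
    fix y assume "y \<in> P"
    then obtain x where "x \<in> X" "y \<in> ball x (\<rho> x)" using X(3) by blast
    with \<open>y \<in> P\<close> show "y \<in> (\<Union>x\<in>X. P \<inter> cball x (\<rho> x))" by (auto intro!: bexI[of _ x])
  qed
  have sets: "P \<inter> cball x (\<rho> x) \<in> sets M" if "x \<in> X" for x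
    using \<rho> that X(1) by auto
  have "emeasure M P \<le> emeasure M (\<Union>x\<in>X. P \<inter> cball x (\<rho> x))"
    using emeasure_mono[OF cover sets.finite_UN[OF X(2) sets]] .
  also have "\<dots> \<le> (\<Sum>x\<in>X. emeasure M (P \<inter> cball x (\<rho> x)))"
    using X(2) sets by (intro emeasure_subadditive_finite) auto
  also have "\<dots> < \<infinity>"
    using X \<rho> by (simp add: sum_Pinfty less_top subset_eq)
  finally show ?thesis .
qed

section \<open>Minkowski content of near-partitions\<close>

definition near_partition :: "'a::topological_space set \<Rightarrow> 'a set set \<Rightarrow> 'a set set \<Rightarrow> bool" where
  "near_partition K \<Q> \<R> \<longleftrightarrow> finite \<Q> \<and> finite \<R> \<and> (\<forall>P\<in>\<Q> \<union> \<R>. compact P \<and> P \<subseteq> K) \<and>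
     disjoint \<Q> \<and> K \<subseteq> \<Union>\<Q> \<union> \<Union>\<R>"

lemma nbhd_eq_UN_ball: "nbhd A r = (\<Union>a\<in>A. ball a r)"
  by (auto simp: nbhd_def dist_commute)

lemma nbhd_mono: "A \<subseteq> B \<Longrightarrow> nbhd A r \<subseteq> nbhd B r"
  by (auto simp: nbhd_def)

lemma nbhd_Union: "nbhd (\<Union>\<A>) r = (\<Union>A\<in>\<A>. nbhd A r)"
  by (auto simp: nbhd_def)

lemma nbhd_Un: "nbhd (A \<union> B) r = nbhd A r \<union> nbhd B r"
  by (auto simp: nbhd_def)

lemma nbhd_lmeasurable:
  assumes "bounded A"
  shows "nbhd A r \<in> lmeasurable"
proof (rule lmeasurable_open)
  obtain B where B: "\<And>a. a \<in> A \<Longrightarrow> norm a \<le> B"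
    using assms by (auto simp: bounded_iff)
  have "norm y \<le> B + \<bar>r\<bar>" if y: "y \<in> nbhd A r" for y
  proof -
    obtain a where "a \<in> A" "dist y a < r" using y unfolding nbhd_def by blast
    then show ?thesis
      using B[of a] norm_triangle_sub[of y a] by (simp add: dist_norm)
  qed
  then show "bounded (nbhd A r)" by (auto simp: bounded_iff)
  show "open (nbhd A r)" by (auto simp: nbhd_eq_UN_ball)
qed

lemma eventually_disjnt_nbhd:
  fixes A B :: "'a::euclidean_space set"
  assumes "compact A" "compact B" "disjnt A B"
  shows "\<forall>\<^sub>F r in at_right 0. disjnt (nbhd A r) (nbhd B r)"
proof -
  obtain e where e: "e > 0" "\<And>a b. a \<in> A \<Longrightarrow> b \<in> B \<Longrightarrow> e \<le> dist a b"
    using separate_compact_closed[OF assms(1) compact_imp_closed[OF assms(2)]] assms(3)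
    by (auto simp: disjnt_def)
  have "disjnt (nbhd A r) (nbhd B r)" if "r < e/2" for r
  proof (rule ccontr)
    assume "\<not> disjnt (nbhd A r) (nbhd B r)"
    then obtain z a b where "a \<in> A" "b \<in> B" "dist z a < r" "dist z b < r"
      by (auto simp: nbhd_def disjnt_def)
    moreover have "dist a b \<le> dist z a + dist z b" by (metis dist_commute dist_triangle)
    ultimately show False using e that by fastforce
  qed
  moreover have "\<forall>\<^sub>F r in at_right 0. r < e/2"
    using eventually_at_right_real[of 0 "e/2"] e(1) by (auto elim: eventually_mono)
  ultimately show ?thesis by (auto elim: eventually_mono)
qed

lemma eventually_measure_nbhd_near_partition:
  fixes K :: "'a::euclidean_space set"
  assumes part: "near_partition K \<Q> \<R>"
  shows "\<forall>\<^sub>F r in at_right 0.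
    (\<Sum>Q\<in>\<Q>. measure lebesgue (nbhd Q r)) \<le> measure lebesgue (nbhd K r) \<and>
    measure lebesgue (nbhd K r) \<le> (\<Sum>Q\<in>\<Q>. measure lebesgue (nbhd Q r)) + (\<Sum>R\<in>\<R>. measure lebesgue (nbhd R r))"
proof -
  have fin: "finite \<Q>" "finite \<R>" and cpt: "\<And>P. P \<in> \<Q> \<union> \<R> \<Longrightarrow> compact P"
    and disj: "disjoint \<Q>" and sub: "\<Union>\<Q> \<subseteq> K" "K \<subseteq> \<Union>\<Q> \<union> \<Union>\<R>"
    using part by (auto simp: near_partition_def)
  have "bounded (\<Union>(\<Q> \<union> \<R>))"
    using fin cpt by (intro bounded_Union) (auto intro: compact_imp_bounded)
  then have K: "bounded K" using sub(2) bounded_subset by (metis Union_Un_distrib)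
  have "\<forall>\<^sub>F r in at_right 0. \<forall>(P, Q)\<in>\<Q> \<times> \<Q>. P \<noteq> Q \<longrightarrow> disjnt (nbhd P r) (nbhd Q r)"
    using fin disj cpt
    by (intro eventually_ball_finite) (auto simp: pairwise_def intro!: eventually_disjnt_nbhd)
  then show ?thesis
  proof eventually_elim
    case (elim r)
    have "pairwise (\<lambda>P Q. disjnt (nbhd P r) (nbhd Q r)) \<Q>"
      using elim by (auto simp: pairwise_def)
    moreover have "(\<Union>Q\<in>\<Q>. nbhd Q r) \<subseteq> nbhd K r"
      using nbhd_mono[OF sub(1)] by (simp add: nbhd_Union)
    moreover have "nbhd K r \<subseteq> (\<Union>Q\<in>\<Q>. nbhd Q r) \<union> (\<Union>R\<in>\<R>. nbhd R r)"
      using nbhd_mono[OF sub(2)] by (simp add: nbhd_Un nbhd_Union)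
    moreover have "nbhd P r \<in> lmeasurable" if "P \<in> insert K (\<Q> \<union> \<R>)" for P
      using that cpt K by (auto intro!: nbhd_lmeasurable intro: compact_imp_bounded)
    ultimately show ?case
      using measure_disjoint_pieces_bounds[OF fin, of "\<lambda>Q. nbhd Q r" "nbhd K r" "\<lambda>R. nbhd R r"]
      by (simp add: fmeasurableD)
  qed
qed

lemma measure_near_partition_bounds:
  assumes part: "near_partition K \<Q> \<R>" and "K \<in> sets M"
    and fin: "\<And>P. P \<in> \<Q> \<union> \<R> \<Longrightarrow> P \<in> fmeasurable M"
  shows "(\<Sum>Q\<in>\<Q>. measure M Q) \<le> measure M K"
    and "measure M K \<le> (\<Sum>Q\<in>\<Q>. measure M Q) + (\<Sum>R\<in>\<R>. measure M R)"
proof -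
  have "finite \<Q>" "finite \<R>" "disjoint \<Q>" "K \<subseteq> \<Union>\<Q> \<union> \<Union>\<R>" "\<Union>\<Q> \<subseteq> K"
    using part by (auto simp: near_partition_def)
  then show "(\<Sum>Q\<in>\<Q>. measure M Q) \<le> measure M K"
    and "measure M K \<le> (\<Sum>Q\<in>\<Q>. measure M Q) + (\<Sum>R\<in>\<R>. measure M R)"
    using measure_disjoint_pieces_bounds[of \<Q> \<R> "\<lambda>Q. Q" K "\<lambda>R. R" M] \<open>K \<in> sets M\<close> fin by auto
qed

lemma has_minkowski_content_near_partition:
  fixes K :: "'a::euclidean_space set" and m :: "'a set \<Rightarrow> real"
  assumes approx: "\<And>\<epsilon>. \<epsilon> > 0 \<Longrightarrow> \<exists>\<Q> \<R>. near_partition K \<Q> \<R> \<and>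
      (\<forall>P\<in>\<Q> \<union> \<R>. has_minkowski_content d P (m P)) \<and>
      \<bar>(\<Sum>Q\<in>\<Q>. m Q) - c\<bar> \<le> \<epsilon> \<and> (\<Sum>R\<in>\<R>. m R) \<le> \<epsilon>"
  shows "has_minkowski_content d K c"
  unfolding has_minkowski_content_def
proof (rule tendstoI)
  fix \<epsilon> :: real assume "\<epsilon> > 0"
  define w where "w r = r powr (d - real DIM('a))" for r :: real
  define g where "g P r = w r * measure lebesgue (nbhd P r)" for P :: "'a set" and r
  obtain \<Q> \<R> where part: "near_partition K \<Q> \<R>"
    and mink: "\<forall>P\<in>\<Q> \<union> \<R>. has_minkowski_content d P (m P)"
    and mQ: "\<bar>(\<Sum>Q\<in>\<Q>. m Q) - c\<bar> \<le> \<epsilon>/4" and mR: "(\<Sum>R\<in>\<R>. m R) \<le> \<epsilon>/4"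
    using approx[of "\<epsilon>/4"] \<open>\<epsilon> > 0\<close> by auto
  have lim: "((\<lambda>r. \<Sum>P\<in>\<P>. g P r) \<longlongrightarrow> (\<Sum>P\<in>\<P>. m P)) (at_right 0)" if "\<P> \<subseteq> \<Q> \<union> \<R>" for \<P>
    using mink that unfolding has_minkowski_content_def g_def w_def
    by (intro tendsto_sum) auto
  have "\<forall>\<^sub>F r in at_right 0. \<bar>(\<Sum>Q\<in>\<Q>. g Q r) - (\<Sum>Q\<in>\<Q>. m Q)\<bar> < \<epsilon>/4"
    using tendstoD[OF lim[of \<Q>], of "\<epsilon>/4"] \<open>\<epsilon> > 0\<close> by (simp add: dist_real_def)
  moreover have "\<forall>\<^sub>F r in at_right 0. \<bar>(\<Sum>R\<in>\<R>. g R r) - (\<Sum>R\<in>\<R>. m R)\<bar> < \<epsilon>/4"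
    using tendstoD[OF lim[of \<R>], of "\<epsilon>/4"] \<open>\<epsilon> > 0\<close> by (simp add: dist_real_def)
  moreover note eventually_measure_nbhd_near_partition[OF part]
  ultimately show "\<forall>\<^sub>F r in at_right 0. dist (r powr (d - real DIM('a)) * measure lebesgue (nbhd K r)) c < \<epsilon>"
  proof eventually_elim
    case (elim r)
    have "w r \<ge> 0" by (simp add: w_def)
    then have "(\<Sum>Q\<in>\<Q>. g Q r) \<le> w r * measure lebesgue (nbhd K r)"
      "w r * measure lebesgue (nbhd K r) \<le> (\<Sum>Q\<in>\<Q>. g Q r) + (\<Sum>R\<in>\<R>. g R r)"
      using elim(3) by (auto simp: g_def sum_distrib_left[symmetric] distrib_left[symmetric] mult_left_mono)
    then show ?case
      using elim(1,2) mQ mR unfolding w_def dist_real_def by linarith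
  qed
qed

lemma has_minkowski_content_unique:
  "has_minkowski_content d K a \<Longrightarrow> has_minkowski_content d K b \<Longrightarrow> a = b"
  unfolding has_minkowski_content_def by (rule tendsto_unique[rotated]) auto

section \<open>Cutting a compact set into small pieces with null frontiers\<close>

lemma near_partition_annuli:
  fixes K :: "'a::euclidean_space set" and e :: "nat \<Rightarrow> 'a"
  assumes K: "compact K" "K \<subseteq> (\<Union>i<N. cball (e i) (s i))" and "0 < \<delta>"
  defines "Q i \<equiv> K \<inter> (cball (e i) (s i) \<inter> (\<Inter>j<i. - ball (e j) (s j + \<delta>)))"
    and "R i \<equiv> K \<inter> (cball (e i) (s i + \<delta>) - ball (e i) (s i))"
  shows "near_partition K (Q ` {..<N}) (R ` {..<N})"
proof -
  have "compact (Q i)" "compact (R i)" for i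
    using K(1) unfolding Q_def R_def
    by (auto intro!: compact_Int_closed closed_Int closed_INT closed_Diff)
  moreover have "disjnt (Q i) (Q j)" if "i < j" for i j
  proof -
    have "Q i \<subseteq> ball (e i) (s i + \<delta>)" using \<open>0 < \<delta>\<close> by (auto simp: Q_def)
    moreover have "Q j \<subseteq> - ball (e i) (s i + \<delta>)" using that by (auto simp: Q_def)
    ultimately show ?thesis by (auto simp: disjnt_def)
  qed
  then have "disjoint (Q ` {..<N})"
    by (intro pairwise_imageI) (metis disjnt_sym linorder_neqE_nat)
  moreover have "K \<subseteq> \<Union>(Q ` {..<N}) \<union> \<Union>(R ` {..<N})"
  proof
    fix y assume "y \<in> K"
    define i where "i = (LEAST i. i < N \<and> dist (e i) y \<le> s i)"
    have "\<exists>i. i < N \<and> dist (e i) y \<le> s i" using K(2) \<open>y \<in> K\<close> by force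
    then have i: "i < N" "dist (e i) y \<le> s i"
      unfolding i_def by (metis (mono_tags, lifting) LeastI_ex)+
    have below: "s j < dist (e j) y" if "j < i" for j
      using not_less_Least[OF that[unfolded i_def]] that i(1) by auto
    show "y \<in> \<Union>(Q ` {..<N}) \<union> \<Union>(R ` {..<N})"
    proof (cases "\<forall>j<i. s j + \<delta> \<le> dist (e j) y")
      case True
      then have "y \<in> Q i" using \<open>y \<in> K\<close> i by (auto simp: Q_def)
      then show ?thesis using i by auto
    next
      case False
      then obtain j where "j < i" "dist (e j) y < s j + \<delta>" by auto
      then have "y \<in> R j" using below[of j] \<open>y \<in> K\<close> by (auto simp: R_def)
      then show ?thesis using \<open>j < i\<close> i by auto
    qed
  qed
  ultimately show ?thesis
    unfolding near_partition_def by (auto simp: Q_def R_def)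
qed

lemma eventually_emeasure_annulus_less:
  fixes M :: "'a::metric_space measure"
  assumes sets: "sets M = sets (restrict_space borel S)" and K: "K \<in> sets borel" "K \<subseteq> S"
    and fin: "emeasure M K < \<infinity>" and null: "emeasure M (K \<inter> sphere x s) = 0" and "0 < a"
  shows "\<forall>\<^sub>F t in at_right 0. emeasure M (K \<inter> (cball x (s + t) - ball x s)) < a"
proof -
  define A where "A t = K \<inter> (cball x (s + t) - ball x s)" for t
  have A_mono: "A t \<subseteq> A t'" if "t \<le> t'" for t t'
    using that by (auto simp: A_def)
  have K_sets: "K \<in> sets M"
    unfolding sets using K by (rule sets_restrict_borelI)
  have A_sets: "A t \<in> sets M" for t
    unfolding sets A_def using K by (intro sets_restrict_borelI) auto
  have "(\<lambda>n. emeasure M (A (1 / Suc n))) \<longlonglongrightarrow> emeasure M (\<Inter>n. A (1 / Suc n))"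
  proof (rule Lim_emeasure_decseq)
    show "decseq (\<lambda>n. A (1 / Suc n))"
      by (intro decseq_SucI A_mono) (simp add: frac_le)
    show "emeasure M (A (1 / Suc n)) \<noteq> \<infinity>" for n
      using fin emeasure_mono[OF _ K_sets, of "A (1 / Suc n)"] by (auto simp: A_def top_unique)
  qed (use A_sets in auto)
  moreover have "(\<Inter>n. A (1 / Suc n)) = K \<inter> sphere x s"
  proof (intro equalityI subsetI)
    fix y assume y: "y \<in> (\<Inter>n. A (1 / Suc n))"
    have "dist x y \<le> s"
    proof (rule ccontr)
      assume "\<not> dist x y \<le> s"
      then obtain n where "1 / Suc n < dist x y - s"
        using reals_Archimedean[of "dist x y - s"] by (auto simp: inverse_eq_divide)
      moreover have "dist x y \<le> s + 1 / Suc n" using y by (auto simp: A_def)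
      ultimately show False by simp
    qed
    with y show "y \<in> K \<inter> sphere x s" by (auto simp: A_def)
  qed (auto simp: A_def)
  ultimately have "\<forall>\<^sub>F n in sequentially. emeasure M (A (1 / Suc n)) < a"
    using null \<open>0 < a\<close> by (intro order_tendstoD(2)) auto
  then obtain n where n: "emeasure M (A (1 / Suc n)) < a"
    by (auto simp: eventually_sequentially)
  have "\<forall>\<^sub>F t in at_right 0. t < 1 / Suc n"
    using eventually_at_right_real[of 0 "1 / Suc n"] by (auto elim: eventually_mono)
  then show ?thesis
  proof eventually_elim
    case (elim t)
    then have "emeasure M (A t) \<le> emeasure M (A (1 / Suc n))"
      by (intro emeasure_mono A_mono A_sets) simp
    then show ?case using n by (simp add: A_def)
  qed
qed

lemma finite_cover_balls_null_spheres:
  fixes M :: "'a::euclidean_space measure" and \<rho> :: "'a \<Rightarrow> real"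
  assumes sets: "sets M = sets (restrict_space borel S)"
    and K: "compact K" "K \<subseteq> S" "emeasure M K < \<infinity>" and \<rho>: "\<And>x. x \<in> K \<Longrightarrow> 0 < \<rho> x"
  obtains N :: nat and e s
  where "\<And>i. i < N \<Longrightarrow> e i \<in> K \<and> \<rho> (e i) / 2 < s i \<and> s i < 3 * \<rho> (e i) / 4 \<and>
      emeasure M (K \<inter> sphere (e i) (s i)) = 0"
    and "K \<subseteq> (\<Union>i<N. cball (e i) (s i))"
proof -
  have "K \<subseteq> (\<Union>x\<in>K. ball x (\<rho> x / 2))"
  proof
    fix x assume "x \<in> K"
    then show "x \<in> (\<Union>x\<in>K. ball x (\<rho> x / 2))" using \<rho>[OF \<open>x \<in> K\<close>] by (intro UN_I[of x]) auto
  qed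
  then obtain X where X: "X \<subseteq> K" "finite X" "K \<subseteq> (\<Union>x\<in>X. ball x (\<rho> x / 2))"
    using compactE_image[OF K(1), of K "\<lambda>x. ball x (\<rho> x / 2)"] by auto
  obtain N e where "X = e ` {i::nat. i < N}"
    using finite_conv_nat_seg_image[THEN iffD1, OF X(2)] by blast
  then have e: "X = e ` {..<N}" by (simp add: lessThan_def)
  have "\<forall>i\<in>{..<N}. \<exists>s. \<rho> (e i) / 2 < s \<and> s < 3 * \<rho> (e i) / 4 \<and> emeasure M (K \<inter> sphere (e i) s) = 0"
  proof
    fix i assume "i \<in> {..<N}"
    then have "\<rho> (e i) / 2 < 3 * \<rho> (e i) / 4" using \<rho> e X(1) by auto
    moreover have "countable {r. emeasure M (K \<inter> sphere (e i) r) \<noteq> 0}"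
      using K by (intro countable_positive_measure_spheres[OF sets] compact_in_sets_restrict_borel[OF sets])
    ultimately show "\<exists>s. \<rho> (e i) / 2 < s \<and> s < 3 * \<rho> (e i) / 4 \<and> emeasure M (K \<inter> sphere (e i) s) = 0"
      using ex_between_notin_countable by blast
  qed
  then obtain s where s: "\<And>i. i < N \<Longrightarrow> \<rho> (e i) / 2 < s i \<and> s i < 3 * \<rho> (e i) / 4 \<and>
      emeasure M (K \<inter> sphere (e i) (s i)) = 0"
    using bchoice[of "{..<N}"] by (metis lessThan_iff)
  have "K \<subseteq> (\<Union>i<N. cball (e i) (s i))"
  proof
    fix y assume "y \<in> K"
    then obtain i where i: "i < N" "dist (e i) y < \<rho> (e i) / 2" using X(3) e by auto
    then have "y \<in> cball (e i) (s i)" using s[OF i(1)] by simp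
    with i(1) show "y \<in> (\<Union>i<N. cball (e i) (s i))" by blast
  qed
  moreover have "e i \<in> K" if "i < N" for i using e X(1) that by auto
  ultimately show ?thesis using that s by blast
qed

lemma ex_annulus_width_null_sphere:
  fixes M :: "'a::euclidean_space measure" and e :: "nat \<Rightarrow> 'a"
  assumes sets: "sets M = sets (restrict_space borel S)"
    and K: "compact K" "K \<subseteq> S" "emeasure M K < \<infinity>"
    and null: "\<And>i. i < N \<Longrightarrow> emeasure M (K \<inter> sphere (e i) (s i)) = 0"
    and "0 < a" and b: "\<And>i. i < N \<Longrightarrow> 0 < b i"
  obtains \<delta> where "0 < \<delta>" and "\<And>i. i < N \<Longrightarrow> \<delta> < b i \<and>
      emeasure M (K \<inter> (cball (e i) (s i + \<delta>) - ball (e i) (s i))) < a \<and>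
      emeasure M (K \<inter> sphere (e i) (s i + \<delta>)) = 0"
proof -
  let ?B = "\<lambda>i. {r. emeasure M (K \<inter> sphere (e i) r) \<noteq> 0}"
  have ev: "\<forall>\<^sub>F t in at_right 0. \<forall>i\<in>{..<N}. t < b i \<and>
      emeasure M (K \<inter> (cball (e i) (s i + t) - ball (e i) (s i))) < a"
  proof (intro eventually_ball_finite ballI eventually_conj)
    fix i assume "i \<in> {..<N}"
    then show "\<forall>\<^sub>F t in at_right 0. t < b i"
      using eventually_at_right_real[of 0 "b i"] b by (auto elim: eventually_mono)
    show "\<forall>\<^sub>F t in at_right 0. emeasure M (K \<inter> (cball (e i) (s i + t) - ball (e i) (s i))) < a"
      using \<open>i \<in> {..<N}\<close> K \<open>0 < a\<close>
      by (intro eventually_emeasure_annulus_less[OF sets] borel_compact null) auto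
  qed simp
  have "countable (?B i)" for i
    using K by (intro countable_positive_measure_spheres[OF sets] compact_in_sets_restrict_borel[OF sets])
  then have bad: "countable (\<Union>i<N. (\<lambda>r. r - s i) ` ?B i)" by blast
  obtain \<delta> where "0 < \<delta>"
    and \<delta>: "\<forall>i\<in>{..<N}. \<delta> < b i \<and> emeasure M (K \<inter> (cball (e i) (s i + \<delta>) - ball (e i) (s i))) < a"
    and good: "\<delta> \<notin> (\<Union>i<N. (\<lambda>r. r - s i) ` ?B i)"
    using ex_eventually_at_right_notin_countable[OF ev bad] by blast
  have "emeasure M (K \<inter> sphere (e i) (s i + \<delta>)) = 0" if "i < N" for i
  proof (rule ccontr)
    assume "emeasure M (K \<inter> sphere (e i) (s i + \<delta>)) \<noteq> 0"
    then have "\<delta> \<in> (\<lambda>r. r - s i) ` ?B i"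
      by (intro image_eqI[of _ _ "s i + \<delta>"]) auto
    with good that show False by blast
  qed
  with \<delta> \<open>0 < \<delta>\<close> show ?thesis using that by blast
qed

lemma emeasure_frontier_of_Int_closed:
  fixes M :: "'a::euclidean_space measure"
  assumes sets: "sets M = sets (restrict_space borel S)"
    and K: "compact K" "K \<subseteq> S" "emeasure M ((top_of_set S) frontier_of K) = 0"
    and F: "closed F" "frontier F \<subseteq> \<Union>\<Z>" "finite \<Z>"
    and null: "\<And>Z. Z \<in> \<Z> \<Longrightarrow> closed Z \<and> emeasure M (K \<inter> Z) = 0"
  shows "emeasure M ((top_of_set S) frontier_of (K \<inter> F)) = 0"
proof (rule null_setsD1, rule null_sets_subset)
  note in_sets = compact_in_sets_restrict_borel[OF sets]
  have KF: "compact (K \<inter> F)" "K \<inter> F \<subseteq> S" using K(1,2) F(1) by (auto intro: compact_Int_closed)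
  show "(top_of_set S) frontier_of (K \<inter> F) \<in> sets M"
    using frontier_of_compact_subset[OF KF] KF(2) by (intro in_sets) auto
  show "(top_of_set S) frontier_of (K \<inter> F) \<subseteq> (top_of_set S) frontier_of K \<union> (\<Union>Z\<in>\<Z>. K \<inter> Z)"
    using frontier_of_Int_closed_subset[OF closedin_compact_subset[OF KF]] F(2) by blast
  have "K \<inter> Z \<in> null_sets M" if "Z \<in> \<Z>" for Z
    using null[OF that] K(1,2) by (auto intro!: in_sets compact_Int_closed)
  moreover have "(top_of_set S) frontier_of K \<in> null_sets M"
    using K frontier_of_compact_subset[OF K(1,2)] by (auto intro!: in_sets)
  ultimately show "(top_of_set S) frontier_of K \<union> (\<Union>Z\<in>\<Z>. K \<inter> Z) \<in> null_sets M"
    using F(3) by (intro null_sets.Un null_sets_UN') (auto intro: countable_finite)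
qed

lemma near_partition_small_null_frontier:
  fixes M :: "'a::euclidean_space measure" and \<rho> :: "'a \<Rightarrow> real"
  assumes sets: "sets M = sets (restrict_space borel S)"
    and K: "compact K" "K \<subseteq> S" "emeasure M K < \<infinity>" "emeasure M ((top_of_set S) frontier_of K) = 0"
    and \<rho>: "\<And>x. x \<in> K \<Longrightarrow> 0 < \<rho> x" and "0 < \<epsilon>"
  shows "\<exists>\<Q> \<R>. near_partition K \<Q> \<R> \<and>
    (\<forall>P\<in>\<Q> \<union> \<R>. (\<exists>x\<in>K. P \<subseteq> cball x (\<rho> x)) \<and> emeasure M ((top_of_set S) frontier_of P) = 0) \<and>
    (\<Sum>R\<in>\<R>. measure M R) \<le> \<epsilon>"
proof -
  obtain N :: nat and e s where s: "\<And>i. i < N \<Longrightarrow> e i \<in> K \<and> \<rho> (e i) / 2 < s i \<and> s i < 3 * \<rho> (e i) / 4 \<and>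
      emeasure M (K \<inter> sphere (e i) (s i)) = 0" and cover: "K \<subseteq> (\<Union>i<N. cball (e i) (s i))"
    using finite_cover_balls_null_spheres[where \<rho> = \<rho>, OF sets K(1-3) \<rho>] by blast
  define a where "a = \<epsilon> / (real N + 1)"
  have "0 < a" using \<open>0 < \<epsilon>\<close> by (simp add: a_def)
  have "emeasure M (K \<inter> sphere (e i) (s i)) = 0" "0 < \<rho> (e i) / 4" if "i < N" for i
    using s[OF that] \<rho> by auto
  then obtain \<delta> where "0 < \<delta>" and \<delta>: "\<And>i. i < N \<Longrightarrow> \<delta> < \<rho> (e i) / 4 \<and>
      emeasure M (K \<inter> (cball (e i) (s i + \<delta>) - ball (e i) (s i))) < ennreal a \<and>
      emeasure M (K \<inter> sphere (e i) (s i + \<delta>)) = 0"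
    using ex_annulus_width_null_sphere[OF sets K(1-3), of N e s "ennreal a" "\<lambda>i. \<rho> (e i) / 4"] \<open>0 < a\<close>
    by (metis ennreal_less_zero_iff)
  define Q where "Q i = K \<inter> (cball (e i) (s i) \<inter> (\<Inter>j<i. - ball (e j) (s j + \<delta>)))" for i
  define R where "R i = K \<inter> (cball (e i) (s i + \<delta>) - ball (e i) (s i))" for i
  have "emeasure M ((top_of_set S) frontier_of Q i) = 0" if "i < N" for i
    unfolding Q_def
  proof (rule emeasure_frontier_of_Int_closed[OF sets K(1,2,4)])
    show "closed (cball (e i) (s i) \<inter> (\<Inter>j<i. - ball (e j) (s j + \<delta>)))"
      by (intro closed_Int closed_INT closed_Compl) auto
    show "frontier (cball (e i) (s i) \<inter> (\<Inter>j<i. - ball (e j) (s j + \<delta>))) \<subseteq>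
        \<Union>(insert (sphere (e i) (s i)) ((\<lambda>j. sphere (e j) (s j + \<delta>)) ` {..<i}))"
      using frontier_cball_Int_Compl_balls_subset[of "{..<i}" "e i" "s i" e "\<lambda>j. s j + \<delta>"] by auto
    show "closed Z \<and> emeasure M (K \<inter> Z) = 0"
      if "Z \<in> insert (sphere (e i) (s i)) ((\<lambda>j. sphere (e j) (s j + \<delta>)) ` {..<i})" for Z
      using that \<open>i < N\<close> s \<delta> by auto
  qed simp
  moreover have "emeasure M ((top_of_set S) frontier_of R i) = 0" if "i < N" for i
    unfolding R_def
  proof (rule emeasure_frontier_of_Int_closed[OF sets K(1,2,4)])
    show "frontier (cball (e i) (s i + \<delta>) - ball (e i) (s i)) \<subseteq> \<Union>{sphere (e i) (s i + \<delta>), sphere (e i) (s i)}"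
      using frontier_annulus_subset by auto
    show "closed Z \<and> emeasure M (K \<inter> Z) = 0" if "Z \<in> {sphere (e i) (s i + \<delta>), sphere (e i) (s i)}" for Z
      using that \<open>i < N\<close> s \<delta> by auto
  qed auto
  moreover have "Q i \<subseteq> cball (e i) (\<rho> (e i))" "R i \<subseteq> cball (e i) (\<rho> (e i))" if "i < N" for i
    using s[OF that] \<delta>[OF that] by (auto simp: Q_def R_def)
  ultimately have "(\<exists>x\<in>K. P \<subseteq> cball x (\<rho> x)) \<and> emeasure M ((top_of_set S) frontier_of P) = 0"
    if "P \<in> Q ` {..<N} \<union> R ` {..<N}" for P
    using that s by blast
  moreover have "(\<Sum>P\<in>R ` {..<N}. measure M P) \<le> \<epsilon>"
  proof -
    have "measure M (R i) \<le> a" if "i < N" for i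
      using \<delta>[OF that] \<open>0 < a\<close> unfolding R_def measure_def by (intro enn2real_leI) auto
    then have "(\<Sum>i<N. measure M (R i)) \<le> real N * a"
      using sum_bounded_above[of "{..<N}" "\<lambda>i. measure M (R i)" a] by simp
    also have "\<dots> \<le> \<epsilon>" using \<open>0 < \<epsilon>\<close> by (simp add: a_def field_simps)
    finally show ?thesis
      using sum_image_le[of "{..<N}" "measure M" R] by simp
  qed
  ultimately show ?thesis
    using near_partition_annuli[OF K(1) cover \<open>0 < \<delta>\<close>, folded Q_def R_def] by blast
qed

section \<open>Minkowski content measures from local data\<close>

definition minkowski_content_on :: "real \<Rightarrow> 'a::euclidean_space set \<Rightarrow> 'a measure \<Rightarrow> 'a set \<Rightarrow> bool" where
  "minkowski_content_on d S M T \<longleftrightarrow> (\<forall>K. compact K \<and> K \<subseteq> T \<longrightarrow> emeasure M K < \<infinity> \<and>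
     (emeasure M ((top_of_set S) frontier_of K) = 0 \<longrightarrow> has_minkowski_content d K (measure M K)))"

lemma minkowski_content_measure_iff:
  "minkowski_content_measure d S M \<longleftrightarrow>
     space M = S \<and> sets M = sets (restrict_space borel S) \<and> minkowski_content_on d S M S"
  by (simp add: minkowski_content_measure_def minkowski_content_on_def)

lemma minkowski_content_onD:
  assumes "minkowski_content_on d S M T" "compact K" "K \<subseteq> T"
  shows "emeasure M K < \<infinity>"
    and "emeasure M ((top_of_set S) frontier_of K) = 0 \<Longrightarrow> has_minkowski_content d K (measure M K)"
  using assms by (auto simp: minkowski_content_on_def)

lemma minkowski_content_on_subset:
  "minkowski_content_on d S M T \<Longrightarrow> T' \<subseteq> T \<Longrightarrow> minkowski_content_on d S M T'"
  by (auto simp: minkowski_content_on_def)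

lemma minkowski_content_on_openin:
  assumes "minkowski_content_measure d T M" "openin (top_of_set S) T"
  shows "minkowski_content_on d S M T"
  using assms frontier_of_subtopology_openin_eq[OF assms(2)]
  by (simp add: minkowski_content_measure_iff minkowski_content_on_def)

lemma minkowski_content_on_cong:
  assumes N: "minkowski_content_on d S N T" and "T \<subseteq> S"
    and eq: "\<And>A. A \<in> sets borel \<Longrightarrow> A \<subseteq> T \<Longrightarrow> emeasure M A = emeasure N A"
  shows "minkowski_content_on d S M T"
  unfolding minkowski_content_on_def
proof (intro allI impI conjI)
  fix K assume "compact K \<and> K \<subseteq> T"
  then have K: "compact K" "K \<subseteq> T" by auto
  have "(top_of_set S) frontier_of K \<subseteq> K" "compact ((top_of_set S) frontier_of K)"
    using frontier_of_compact_subset[of K S] K \<open>T \<subseteq> S\<close> by auto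
  then have frontier_eq: "emeasure M ((top_of_set S) frontier_of K) = emeasure N ((top_of_set S) frontier_of K)"
    using K(2) by (intro eq borel_compact) auto
  have K_eq: "emeasure M K = emeasure N K"
    using K by (intro eq borel_compact)
  then show "emeasure M K < \<infinity>"
    using minkowski_content_onD(1)[OF N K] by simp
  assume "emeasure M ((top_of_set S) frontier_of K) = 0"
  then show "has_minkowski_content d K (measure M K)"
    using minkowski_content_onD(2)[OF N K] frontier_eq K_eq by (simp add: measure_def)
qed

lemma has_minkowski_content_if_local:
  fixes M :: "'a::euclidean_space measure"
  assumes sets: "sets M = sets (restrict_space borel S)"
    and fin: "\<And>P. compact P \<Longrightarrow> P \<subseteq> S \<Longrightarrow> emeasure M P < \<infinity>"
    and \<rho>_pos: "\<And>x. x \<in> S \<Longrightarrow> 0 < \<rho> x"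
    and \<rho>: "\<And>x. x \<in> S \<Longrightarrow> minkowski_content_on d S M (cball x (\<rho> x) \<inter> S)"
    and K: "compact K" "K \<subseteq> S" "emeasure M ((top_of_set S) frontier_of K) = 0"
  shows "has_minkowski_content d K (measure M K)"
proof (rule has_minkowski_content_near_partition)
  fix \<epsilon> :: real assume "\<epsilon> > 0"
  moreover have "\<rho> x > 0" if "x \<in> K" for x
    using \<rho>_pos that K(2) by blast
  ultimately obtain \<Q> \<R> where part: "near_partition K \<Q> \<R>"
    and pieces: "\<forall>P\<in>\<Q> \<union> \<R>. (\<exists>x\<in>K. P \<subseteq> cball x (\<rho> x)) \<and> emeasure M ((top_of_set S) frontier_of P) = 0"
    and R: "(\<Sum>R\<in>\<R>. measure M R) \<le> \<epsilon>"
    using near_partition_small_null_frontier[OF sets K(1,2) fin[OF K(1,2)] K(3)] by metis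
  have sub: "compact P \<and> P \<subseteq> K" if "P \<in> \<Q> \<union> \<R>" for P
    using part that by (auto simp: near_partition_def)
  have "has_minkowski_content d P (measure M P)" if P: "P \<in> \<Q> \<union> \<R>" for P
  proof -
    obtain x where x: "x \<in> K" "P \<subseteq> cball x (\<rho> x)" using pieces P by blast
    then have "P \<subseteq> cball x (\<rho> x) \<inter> S" "compact P"
      using sub[OF P] K(2) by auto
    moreover have "emeasure M ((top_of_set S) frontier_of P) = 0" using pieces P by blast
    ultimately show ?thesis
      using minkowski_content_onD(2)[OF \<rho>] x(1) K(2) by blast
  qed
  moreover have "P \<in> fmeasurable M" if "P \<in> \<Q> \<union> \<R>" for P
    using sub[OF that] K(2) fin compact_in_sets_restrict_borel[OF sets] by (intro fmeasurableI) auto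
  then have "(\<Sum>Q\<in>\<Q>. measure M Q) \<le> measure M K"
    "measure M K \<le> (\<Sum>Q\<in>\<Q>. measure M Q) + (\<Sum>R\<in>\<R>. measure M R)"
    using measure_near_partition_bounds[OF part compact_in_sets_restrict_borel[OF sets K(1,2)]] by auto
  ultimately show "\<exists>\<Q> \<R>. near_partition K \<Q> \<R> \<and> (\<forall>P\<in>\<Q> \<union> \<R>. has_minkowski_content d P (measure M P)) \<and>
      \<bar>(\<Sum>Q\<in>\<Q>. measure M Q) - measure M K\<bar> \<le> \<epsilon> \<and> (\<Sum>R\<in>\<R>. measure M R) \<le> \<epsilon>"
    using part R by (intro exI[of _ \<Q>] exI[of _ \<R>]) auto
qed

lemma minkowski_content_measure_if_local:
  fixes M :: "'a::euclidean_space measure"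
  assumes space: "space M = S" and sets: "sets M = sets (restrict_space borel S)"
    and local: "\<And>x. x \<in> S \<Longrightarrow> \<exists>\<rho>>0. minkowski_content_on d S M (cball x \<rho> \<inter> S)"
  shows "minkowski_content_measure d S M"
proof -
  obtain \<rho> where \<rho>_pos: "\<And>x. x \<in> S \<Longrightarrow> \<rho> x > 0"
    and \<rho>: "\<And>x. x \<in> S \<Longrightarrow> minkowski_content_on d S M (cball x (\<rho> x) \<inter> S)"
    using local by metis
  have fin: "emeasure M P < \<infinity>" if P: "compact P" "P \<subseteq> S" for P
  proof (rule emeasure_compact_less_top[OF P(1)])
    fix x assume "x \<in> P"
    have "compact (P \<inter> cball x (\<rho> x))" "P \<inter> cball x (\<rho> x) \<subseteq> cball x (\<rho> x) \<inter> S"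
      using P by (auto simp: compact_Int_closed)
    then show "\<exists>r>0. P \<inter> cball x r \<in> sets M \<and> emeasure M (P \<inter> cball x r) < \<infinity>"
      using \<rho>_pos[of x] minkowski_content_onD(1)[OF \<rho>] \<open>x \<in> P\<close> P(2)
        compact_in_sets_restrict_borel[OF sets, of "P \<inter> cball x (\<rho> x)"]
      by blast
  qed
  then show ?thesis
    using space sets has_minkowski_content_if_local[OF sets fin \<rho>_pos \<rho>]
    by (auto simp: minkowski_content_measure_iff minkowski_content_on_def)
qed

section \<open>Uniqueness of Minkowski content measures\<close>

definition null_frontier_compacts :: "'a::euclidean_space set \<Rightarrow> 'a measure set \<Rightarrow> 'a set \<Rightarrow> 'a set set" where
  "null_frontier_compacts S \<M> T =
     {P. compact P \<and> P \<subseteq> T \<and> (\<forall>M\<in>\<M>. emeasure M ((top_of_set S) frontier_of P) = 0)}"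

lemma ex_radius_null_frontier:
  fixes W :: "'a::euclidean_space set" and \<M> :: "'a measure set"
  assumes W: "openin (top_of_set S) W" and "countable \<M>"
    and sets: "\<And>M. M \<in> \<M> \<Longrightarrow> \<exists>A. W \<subseteq> A \<and> sets M = sets (restrict_space borel A)"
    and fin: "\<And>M K. M \<in> \<M> \<Longrightarrow> compact K \<Longrightarrow> K \<subseteq> W \<Longrightarrow> emeasure M K < \<infinity>"
    and "0 < e" and K: "compact (W \<inter> cball x e)"
  shows "\<exists>r. 0 < r \<and> r < e \<and> W \<inter> cball x r \<in> null_frontier_compacts S \<M> W"
proof -
  have in_sets: "P \<in> sets M" if M: "M \<in> \<M>" and P: "compact P" "P \<subseteq> W" for M P
  proof -
    obtain A where "W \<subseteq> A" "sets M = sets (restrict_space borel A)" using sets[OF M] by blast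
    then show ?thesis using compact_in_sets_restrict_borel[of M A P] P by blast
  qed
  have "countable {r. emeasure M (W \<inter> cball x e \<inter> sphere x r) \<noteq> 0}" if M: "M \<in> \<M>" for M
  proof -
    obtain A where "W \<subseteq> A" "sets M = sets (restrict_space borel A)" using sets[OF M] by blast
    then show ?thesis
      using fin[OF M K] in_sets[OF M K] by (intro countable_positive_measure_spheres) auto
  qed
  then have "countable (\<Union>M\<in>\<M>. {r. emeasure M (W \<inter> cball x e \<inter> sphere x r) \<noteq> 0})"
    using \<open>countable \<M>\<close> by blast
  then obtain r where r: "0 < r" "r < e"
    and "r \<notin> (\<Union>M\<in>\<M>. {r. emeasure M (W \<inter> cball x e \<inter> sphere x r) \<noteq> 0})"
    using ex_between_notin_countable[OF \<open>0 < e\<close>] by blast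
  then have null: "emeasure M (W \<inter> cball x e \<inter> sphere x r) = 0" if "M \<in> \<M>" for M
    using that by blast
  have "W \<inter> cball x r = (W \<inter> cball x e) \<inter> cball x r" using r by auto
  then have Kr: "compact (W \<inter> cball x r)" using K by (simp add: compact_Int_closed)
  have "W \<inter> cball x r \<subseteq> S" using openin_imp_subset[OF W] by blast
  then have frontier: "(top_of_set S) frontier_of (W \<inter> cball x r) \<subseteq> W \<inter> cball x e \<inter> sphere x r"
    using frontier_of_openin_Int_subset[OF W closedin_compact_subset[OF Kr]] r by auto
  have "emeasure M ((top_of_set S) frontier_of (W \<inter> cball x r)) = 0" if M: "M \<in> \<M>" for M
  proof (rule null_setsD1, rule null_sets_subset[OF _ _ frontier])
    have "compact (W \<inter> cball x e \<inter> sphere x r)" using K by (simp add: compact_Int_closed)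
    then show "W \<inter> cball x e \<inter> sphere x r \<in> null_sets M"
      using null[OF M] in_sets[OF M] by auto
    show "(top_of_set S) frontier_of (W \<inter> cball x r) \<in> sets M"
      using frontier_of_compact_subset[OF Kr \<open>W \<inter> cball x r \<subseteq> S\<close>] by (intro in_sets[OF M]) auto
  qed
  with r Kr show ?thesis by (auto simp: null_frontier_compacts_def)
qed

lemma countable_cover_null_frontier_compacts:
  fixes W :: "'a::euclidean_space set" and \<M> :: "'a measure set"
  assumes W: "locally compact W" "openin (top_of_set S) W" and "countable \<M>"
    and sets: "\<And>M. M \<in> \<M> \<Longrightarrow> \<exists>A. W \<subseteq> A \<and> sets M = sets (restrict_space borel A)"
    and fin: "\<And>M K. M \<in> \<M> \<Longrightarrow> compact K \<Longrightarrow> K \<subseteq> W \<Longrightarrow> emeasure M K < \<infinity>"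
  shows "\<exists>\<A>. countable \<A> \<and> \<A> \<subseteq> null_frontier_compacts S \<M> W \<and> \<Union>\<A> = W"
proof -
  have "\<exists>\<A>. countable \<A> \<and> (\<forall>A\<in>\<A>. \<exists>x r. A = W \<inter> cball x r \<and> compact A \<and>
      W \<inter> cball x r \<in> null_frontier_compacts S \<M> W) \<and> \<Union>\<A> = W"
    using ex_radius_null_frontier[OF W(2) \<open>countable \<M>\<close> sets fin]
    by (rule countable_cover_compact_balls[OF W(1)])
  then obtain \<A> where "countable \<A>" "\<Union>\<A> = W"
    and balls: "\<forall>A\<in>\<A>. \<exists>x r. A = W \<inter> cball x r \<and> compact A \<and> W \<inter> cball x r \<in> null_frontier_compacts S \<M> W"
    by blast
  moreover have "\<A> \<subseteq> null_frontier_compacts S \<M> W"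
  proof
    fix A assume "A \<in> \<A>"
    then obtain x r where "A = W \<inter> cball x r" "W \<inter> cball x r \<in> null_frontier_compacts S \<M> W"
      using balls by blast
    then show "A \<in> null_frontier_compacts S \<M> W" by simp
  qed
  ultimately show ?thesis by blast
qed

lemma Int_stable_null_frontier_compacts:
  fixes T :: "'a::euclidean_space set"
  assumes "T \<subseteq> S" and in_sets: "\<And>M P. M \<in> \<M> \<Longrightarrow> compact P \<Longrightarrow> P \<subseteq> T \<Longrightarrow> P \<in> sets M"
  shows "Int_stable (null_frontier_compacts S \<M> T)"
proof (rule Int_stableI)
  fix P Q assume "P \<in> null_frontier_compacts S \<M> T" "Q \<in> null_frontier_compacts S \<M> T"
  then have P: "compact P" "P \<subseteq> T" and Q: "compact Q" "Q \<subseteq> T"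
    and null: "\<And>M. M \<in> \<M> \<Longrightarrow> emeasure M ((top_of_set S) frontier_of P) = 0 \<and>
      emeasure M ((top_of_set S) frontier_of Q) = 0"
    by (auto simp: null_frontier_compacts_def)
  have PQ: "compact (P \<inter> Q)" "P \<inter> Q \<subseteq> T" using P Q by (auto intro: compact_Int)
  have "emeasure M ((top_of_set S) frontier_of (P \<inter> Q)) = 0" if M: "M \<in> \<M>" for M
  proof (rule null_setsD1, rule null_sets_subset)
    show "(top_of_set S) frontier_of P \<union> (top_of_set S) frontier_of Q \<in> null_sets M"
      using null[OF M] frontier_of_compact_subset[of P S] frontier_of_compact_subset[of Q S] P Q \<open>T \<subseteq> S\<close>
      by (intro null_sets.Un null_setsI in_sets[OF M]) auto
    show "(top_of_set S) frontier_of (P \<inter> Q) \<in> sets M"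
      using frontier_of_compact_subset[of "P \<inter> Q" S] PQ \<open>T \<subseteq> S\<close> by (intro in_sets[OF M]) auto
  qed (rule frontier_of_Int_subset)
  with PQ show "P \<inter> Q \<in> null_frontier_compacts S \<M> T" by (simp add: null_frontier_compacts_def)
qed

lemma sets_restrict_borel_eq_sigma_null_frontier_compacts:
  fixes T :: "'a::euclidean_space set" and \<M> :: "'a measure set"
  assumes S: "locally compact S" and T: "openin (top_of_set S) T" and "countable \<M>"
    and sets: "\<And>M. M \<in> \<M> \<Longrightarrow> \<exists>A. T \<subseteq> A \<and> sets M = sets (restrict_space borel A)"
    and fin: "\<And>M K. M \<in> \<M> \<Longrightarrow> compact K \<Longrightarrow> K \<subseteq> T \<Longrightarrow> emeasure M K < \<infinity>"
  shows "sets (restrict_space borel T) = sigma_sets T (null_frontier_compacts S \<M> T)"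
proof (rule sets_restrict_borel_eq_sigma_sets)
  show "T \<in> sets borel" using locally_compact_imp_borel[OF locally_open_subset[OF S T]] .
  show "null_frontier_compacts S \<M> T \<subseteq> sets (restrict_space borel T)"
    by (auto simp: null_frontier_compacts_def intro!: sets_restrict_borelI borel_compact)
  fix V :: "'a set" assume "open V"
  then have W: "openin (top_of_set S) (T \<inter> V)" using T by (intro openin_Int_open)
  have "\<exists>A. T \<inter> V \<subseteq> A \<and> sets M = sets (restrict_space borel A)" if "M \<in> \<M>" for M
    using sets[OF that] by blast
  moreover have "emeasure M K < \<infinity>" if "M \<in> \<M>" "compact K" "K \<subseteq> T \<inter> V" for M K
    using fin that by blast
  ultimately have "\<exists>\<A>. countable \<A> \<and> \<A> \<subseteq> null_frontier_compacts S \<M> (T \<inter> V) \<and> \<Union>\<A> = T \<inter> V"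
    by (rule countable_cover_null_frontier_compacts[OF locally_open_subset[OF S W] W \<open>countable \<M>\<close>])
  moreover have "null_frontier_compacts S \<M> (T \<inter> V) \<subseteq> null_frontier_compacts S \<M> T"
    by (auto simp: null_frontier_compacts_def)
  ultimately show "\<exists>\<A>. countable \<A> \<and> \<A> \<subseteq> null_frontier_compacts S \<M> T \<and> \<Union>\<A> = T \<inter> V"
    by blast
qed

lemma emeasure_eq_if_minkowski_content_on:
  fixes \<mu> \<nu> :: "'a::euclidean_space measure"
  assumes S: "locally compact S" and T: "openin (top_of_set S) T"
    and \<mu>: "sets \<mu> = sets (restrict_space borel A\<mu>)" "T \<subseteq> A\<mu>" "minkowski_content_on d S \<mu> T"
    and \<nu>: "sets \<nu> = sets (restrict_space borel A\<nu>)" "T \<subseteq> A\<nu>" "minkowski_content_on d S \<nu> T"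
    and X: "X \<in> sets borel" "X \<subseteq> T"
  shows "emeasure \<mu> X = emeasure \<nu> X"
proof -
  let ?E = "null_frontier_compacts S {\<mu>, \<nu>} T"
  have T_borel: "T \<in> sets borel" using locally_compact_imp_borel[OF locally_open_subset[OF S T]] .
  have sets: "\<exists>A. T \<subseteq> A \<and> sets M = sets (restrict_space borel A)" if "M \<in> {\<mu>, \<nu>}" for M
    using that \<mu>(1,2) \<nu>(1,2) by blast
  have in_sets: "P \<in> sets M" if "M \<in> {\<mu>, \<nu>}" "compact P" "P \<subseteq> T" for M P
    using that \<mu>(1,2) \<nu>(1,2) compact_in_sets_restrict_borel[of _ _ P] by auto
  have fin: "emeasure M P < \<infinity>" if "M \<in> {\<mu>, \<nu>}" "compact P" "P \<subseteq> T" for M P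
    using that minkowski_content_onD(1)[OF \<mu>(3)] minkowski_content_onD(1)[OF \<nu>(3)] by auto
  have agree: "emeasure (restrict_space \<mu> T) P = emeasure (restrict_space \<nu> T) P" if "P \<in> ?E" for P
  proof -
    have P: "compact P" "P \<subseteq> T" using that by (auto simp: null_frontier_compacts_def)
    have "measure \<mu> P = measure \<nu> P"
      using that minkowski_content_onD(2)[OF \<mu>(3) P] minkowski_content_onD(2)[OF \<nu>(3) P]
      by (intro has_minkowski_content_unique[of d P]) (auto simp: null_frontier_compacts_def)
    then have "emeasure \<mu> P = emeasure \<nu> P"
      using fin[of \<mu> P] fin[of \<nu> P] P by (simp add: emeasure_eq_ennreal_measure less_top)
    then show ?thesis
      using emeasure_restrict_space_restrict_borel[OF \<mu>(1) T_borel \<mu>(2) P(2)]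
        emeasure_restrict_space_restrict_borel[OF \<nu>(1) T_borel \<nu>(2) P(2)] by simp
  qed
  have "countable {\<mu>, \<nu>}" by simp
  note cover = countable_cover_null_frontier_compacts[OF locally_open_subset[OF S T] T this sets fin]
  obtain \<A> where \<A>: "countable \<A>" "\<A> \<subseteq> ?E" "\<Union>\<A> = T"
    using cover by blast
  have "emeasure (restrict_space \<mu> T) A \<noteq> \<infinity>" if "A \<in> \<A>" for A
    using that \<A>(2) fin[of \<mu> A] emeasure_restrict_space_restrict_borel[OF \<mu>(1) T_borel \<mu>(2)]
    by (auto simp: null_frontier_compacts_def)
  moreover have "sets (restrict_space M T) = sigma_sets T ?E" if "M \<in> {\<mu>, \<nu>}" for M
    using that sets_restrict_space_restrict_borel[OF \<mu>(1,2)] sets_restrict_space_restrict_borel[OF \<nu>(1,2)]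
      sets_restrict_borel_eq_sigma_null_frontier_compacts[OF S T \<open>countable {\<mu>, \<nu>}\<close> sets fin] by auto
  moreover have "Int_stable ?E"
    using openin_imp_subset[OF T] in_sets by (rule Int_stable_null_frontier_compacts)
  moreover have "?E \<subseteq> Pow T" by (auto simp: null_frontier_compacts_def)
  ultimately have "restrict_space \<mu> T = restrict_space \<nu> T"
    using measure_eqI_generator_eq_countable[OF _ _ agree _ _ \<A>(2,3,1)] by blast
  then show ?thesis
    using emeasure_restrict_space_restrict_borel[OF \<mu>(1) T_borel \<mu>(2) X(2)]
      emeasure_restrict_space_restrict_borel[OF \<nu>(1) T_borel \<nu>(2) X(2)] by simp
qed

section \<open>Gluing\<close>

lemma countable_disjoint_refinement:
  fixes T :: "'i \<Rightarrow> 'a set"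
  assumes I: "countable I" and T: "\<And>i. i \<in> I \<Longrightarrow> T i \<in> sets N"
  shows "\<exists>D. (\<forall>i\<in>I. D i \<in> sets N \<and> D i \<subseteq> T i) \<and> disjoint_family_on D I \<and>
    (\<Union>i\<in>I. T i) \<subseteq> (\<Union>i\<in>I. D i)"
proof (intro exI conjI ballI)
  define f where "f = to_nat_on I"
  define D where "D i = T i - (\<Union>j\<in>{j\<in>I. f j < f i}. T j)" for i
  show "D i \<in> sets N" if "i \<in> I" for i
    unfolding D_def using that T I by (intro sets.Diff sets.countable_UN'') (auto intro: countable_subset)
  show "D i \<subseteq> T i" for i by (auto simp: D_def)
  show "(\<Union>i\<in>I. T i) \<subseteq> (\<Union>i\<in>I. D i)"
  proof
    fix x assume "x \<in> (\<Union>i\<in>I. T i)"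
    define n where "n = (LEAST n. \<exists>j\<in>I. f j = n \<and> x \<in> T j)"
    have "\<exists>n. \<exists>j\<in>I. f j = n \<and> x \<in> T j" using \<open>x \<in> (\<Union>i\<in>I. T i)\<close> by auto
    then have "\<exists>j\<in>I. f j = n \<and> x \<in> T j" unfolding n_def by (rule LeastI_ex)
    then obtain j where j: "j \<in> I" "f j = n" "x \<in> T j" by blast
    have "x \<notin> T k" if "k \<in> I" "f k < f j" for k
    proof
      assume "x \<in> T k"
      then have "n \<le> f k" unfolding n_def using that(1) by (intro Least_le) auto
      then show False using that(2) j(2) by simp
    qed
    then show "x \<in> (\<Union>i\<in>I. D i)" using j by (auto simp: D_def)
  qed
  show "disjoint_family_on D I"
    unfolding disjoint_family_on_def
  proof (intro ballI impI)
    fix i j assume "i \<in> I" "j \<in> I" "i \<noteq> j"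
    then have "f i \<noteq> f j" using inj_on_to_nat_on[OF I] by (auto simp: f_def inj_on_def)
    then show "D i \<inter> D j = {}"
      using \<open>i \<in> I\<close> \<open>j \<in> I\<close> by (cases "f i < f j") (auto simp: D_def)
  qed
qed

lemma ex_measure_sum_disjoint:
  fixes N :: "'a measure" and \<M> :: "'i \<Rightarrow> 'a measure" and D :: "'i \<Rightarrow> 'a set"
  assumes I: "countable I" and D: "\<And>i. i \<in> I \<Longrightarrow> D i \<in> sets N"
    and in_sets: "\<And>i A. i \<in> I \<Longrightarrow> A \<in> sets N \<Longrightarrow> A \<subseteq> D i \<Longrightarrow> A \<in> sets (\<M> i)"
  defines "S \<equiv> \<Union>i\<in>I. D i"
  shows "\<exists>M. space M = S \<and> sets M = sets (restrict_space N S) \<and>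
    (\<forall>A\<in>sets (restrict_space N S). emeasure M A = (\<integral>\<^sup>+i. emeasure (\<M> i) (A \<inter> D i) \<partial>count_space I))"
proof -
  define SA where "SA = sets (restrict_space N S)"
  define \<mu> where "\<mu> A = (\<integral>\<^sup>+i. emeasure (\<M> i) (A \<inter> D i) \<partial>count_space I)" for A
  have S_space: "S \<subseteq> space N" using D sets.sets_into_space by (auto simp: S_def)
  have SA: "A \<in> SA \<longleftrightarrow> A \<subseteq> S \<and> A \<in> sets N" for A
  proof -
    have "S \<in> sets N" unfolding S_def using D I by (intro sets.countable_UN'') auto
    then show ?thesis using S_space by (simp add: SA_def sets_restrict_space_iff Int_absorb2)
  qed
  have "sigma_algebra S SA"
    using sets.sigma_algebra_axioms[of "restrict_space N S"] S_space
    by (simp add: SA_def space_restrict_space Int_absorb2)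
  moreover have "positive SA \<mu>" by (simp add: positive_def \<mu>_def)
  moreover have "countably_additive SA \<mu>"
  proof (rule countably_additiveI)
    fix A :: "nat \<Rightarrow> 'a set" assume A: "range A \<subseteq> SA" "disjoint_family A"
    have "(\<Sum>n. \<mu> (A n)) = (\<integral>\<^sup>+i. (\<Sum>n. emeasure (\<M> i) (A n \<inter> D i)) \<partial>count_space I)"
      unfolding \<mu>_def by (rule nn_integral_suminf[symmetric]) simp
    also have "\<dots> = (\<integral>\<^sup>+i. emeasure (\<M> i) ((\<Union>n. A n) \<inter> D i) \<partial>count_space I)"
    proof (rule nn_integral_cong)
      fix i assume "i \<in> space (count_space I)"
      then have "i \<in> I" by simp
      have "A n \<inter> D i \<in> sets (\<M> i)" for n
      proof (rule in_sets[OF \<open>i \<in> I\<close>])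
        have "A n \<in> SA" using A(1) by auto
        then show "A n \<inter> D i \<in> sets N" using D[OF \<open>i \<in> I\<close>] by (auto simp: SA)
      qed blast
      moreover have "disjoint_family (\<lambda>n. A n \<inter> D i)"
        using A(2) by (auto simp: disjoint_family_on_def)
      ultimately show "(\<Sum>n. emeasure (\<M> i) (A n \<inter> D i)) = emeasure (\<M> i) ((\<Union>n. A n) \<inter> D i)"
        by (subst suminf_emeasure) auto
    qed
    finally show "(\<Sum>n. \<mu> (A n)) = \<mu> (\<Union>n. A n)" by (simp add: \<mu>_def)
  qed
  ultimately have "emeasure (measure_of S SA \<mu>) A = \<mu> A" if "A \<in> SA" for A
    using that by (rule emeasure_measure_of_sigma)
  moreover have "space (measure_of S SA \<mu>) = S" "sets (measure_of S SA \<mu>) = SA"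
    using \<open>sigma_algebra S SA\<close>
    by (simp_all add: sigma_algebra.space_measure_of_eq sigma_algebra.sets_measure_of_eq)
  ultimately show ?thesis
    unfolding SA_def \<mu>_def by blast
qed

lemma glue_measures_countable:
  fixes N :: "'a measure" and \<M> :: "'i \<Rightarrow> 'a measure" and T :: "'i \<Rightarrow> 'a set"
  assumes I: "countable I"
    and T: "\<And>i. i \<in> I \<Longrightarrow> T i \<in> sets N"
    and sets: "\<And>i. i \<in> I \<Longrightarrow> sets (\<M> i) = sets (restrict_space N (T i))"
    and agree: "\<And>i j A. i \<in> I \<Longrightarrow> j \<in> I \<Longrightarrow> A \<in> sets N \<Longrightarrow> A \<subseteq> T i \<inter> T j \<Longrightarrow>
      emeasure (\<M> i) A = emeasure (\<M> j) A"
  defines "S \<equiv> \<Union>i\<in>I. T i"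
  shows "\<exists>M. space M = S \<and> sets M = sets (restrict_space N S) \<and>
    (\<forall>i\<in>I. \<forall>A\<in>sets N. A \<subseteq> T i \<longrightarrow> emeasure M A = emeasure (\<M> i) A)"
proof -
  have in_sets: "A \<in> sets (\<M> i)" if "i \<in> I" "A \<in> sets N" "A \<subseteq> T i" for i A
    using that T[OF that(1)] sets[OF that(1)] by (simp add: sets_restrict_space_iff Int_absorb2 sets.sets_into_space)
  from countable_disjoint_refinement[OF I T] obtain D
    where D_props: "(\<forall>i\<in>I. D i \<in> sets N \<and> D i \<subseteq> T i) \<and> disjoint_family_on D I \<and>
      (\<Union>i\<in>I. T i) \<subseteq> (\<Union>i\<in>I. D i)" ..
  then have D: "\<And>i. i \<in> I \<Longrightarrow> D i \<in> sets N" "\<And>i. i \<in> I \<Longrightarrow> D i \<subseteq> T i"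
    and D_disj: "disjoint_family_on D I" by auto
  have D_Union: "(\<Union>i\<in>I. D i) = S"
    using D_props D(2) unfolding S_def by blast
  have "A \<in> sets (\<M> i)" if "i \<in> I" "A \<in> sets N" "A \<subseteq> D i" for i A
    using in_sets[OF that(1,2)] that(3) D(2)[OF that(1)] by blast
  from ex_measure_sum_disjoint[where D = D and \<M> = \<M>, OF I D(1) this, unfolded D_Union]
  obtain M where "space M = S \<and> sets M = sets (restrict_space N S) \<and>
      (\<forall>A\<in>sets (restrict_space N S). emeasure M A = (\<integral>\<^sup>+i. emeasure (\<M> i) (A \<inter> D i) \<partial>count_space I))" ..
  then have M: "space M = S" "sets M = sets (restrict_space N S)"
    and M_sum: "\<And>A. A \<in> sets (restrict_space N S) \<Longrightarrow> emeasure M A = (\<integral>\<^sup>+i. emeasure (\<M> i) (A \<inter> D i) \<partial>count_space I)"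
    by auto
  have "emeasure M A = emeasure (\<M> m) A" if m: "m \<in> I" and A: "A \<in> sets N" "A \<subseteq> T m" for m A
  proof -
    have "A \<subseteq> S" using A m by (auto simp: S_def)
    then have "emeasure M A = (\<integral>\<^sup>+i. emeasure (\<M> i) (A \<inter> D i) \<partial>count_space I)"
      using A(1) by (intro M_sum) (auto simp: sets_restrict_space)
    also have "\<dots> = (\<integral>\<^sup>+i. emeasure (\<M> m) (A \<inter> D i) \<partial>count_space I)"
      using A m D by (intro nn_integral_cong agree) auto
    also have "\<dots> = emeasure (\<M> m) (\<Union>i\<in>I. A \<inter> D i)"
    proof (rule emeasure_UN_countable[symmetric, OF _ I])
      show "A \<inter> D i \<in> sets (\<M> m)" if "i \<in> I" for i
        using A m D(1)[OF that] by (intro in_sets) auto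
      show "disjoint_family_on (\<lambda>i. A \<inter> D i) I"
        using D_disj unfolding disjoint_family_on_def by blast
    qed
    also have "(\<Union>i\<in>I. A \<inter> D i) = A"
      using D_Union \<open>A \<subseteq> S\<close> by auto
    finally show ?thesis .
  qed
  with M show ?thesis by blast
qed

lemma minkowski_content_measure_countable_Union:
  fixes S :: "'a::euclidean_space set" and T :: "'i \<Rightarrow> 'a set"
  assumes S: "locally compact S" and "countable I" and S_eq: "S = (\<Union>i\<in>I. T i)"
    and openin: "\<And>i. i \<in> I \<Longrightarrow> openin (top_of_set S) (T i)"
    and M: "\<And>i. i \<in> I \<Longrightarrow> minkowski_content_measure d (T i) (M i)"
  shows "\<exists>G. minkowski_content_measure d S G"
proof -
  have sets: "sets (M i) = sets (restrict_space borel (T i))"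
    and on: "minkowski_content_on d S (M i) (T i)" if "i \<in> I" for i
    using M[OF that] minkowski_content_on_openin[OF M[OF that] openin[OF that]]
    by (auto simp: minkowski_content_measure_iff)
  have "\<exists>G. space G = S \<and> sets G = sets (restrict_space borel S) \<and>
      (\<forall>i\<in>I. \<forall>A\<in>sets borel. A \<subseteq> T i \<longrightarrow> emeasure G A = emeasure (M i) A)"
    unfolding S_eq
  proof (rule glue_measures_countable[OF \<open>countable I\<close> _ sets])
    show "T i \<in> sets borel" if "i \<in> I" for i
      using locally_compact_imp_borel[OF locally_open_subset[OF S openin[OF that]]] .
    show "emeasure (M i) A = emeasure (M j) A"
      if "i \<in> I" "j \<in> I" "A \<in> sets borel" "A \<subseteq> T i \<inter> T j" for i j A
      using emeasure_eq_if_minkowski_content_on[OF S openin_Int[OF openin openin, OF that(1,2)]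
          sets[OF that(1)] Int_lower1 minkowski_content_on_subset[OF on[OF that(1)] Int_lower1]
          sets[OF that(2)] Int_lower2 minkowski_content_on_subset[OF on[OF that(2)] Int_lower2] that(3,4)] .
  qed
  then obtain G where G: "space G = S" "sets G = sets (restrict_space borel S)"
    and G_eq: "\<And>i A. i \<in> I \<Longrightarrow> A \<in> sets borel \<Longrightarrow> A \<subseteq> T i \<Longrightarrow> emeasure G A = emeasure (M i) A"
    by blast
  have "minkowski_content_measure d S G"
  proof (rule minkowski_content_measure_if_local[OF G])
    fix x assume "x \<in> S"
    then obtain i where i: "i \<in> I" "x \<in> T i" using S_eq by blast
    then obtain \<rho> where "0 < \<rho>" "cball x \<rho> \<inter> S \<subseteq> T i"
      using openin[OF i(1)] unfolding openin_contains_cball by blast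
    moreover have "minkowski_content_on d S G (T i)"
      by (rule minkowski_content_on_cong[OF on[OF i(1)] openin_imp_subset[OF openin[OF i(1)]] G_eq[OF i(1)]])
    ultimately show "\<exists>\<rho>>0. minkowski_content_on d S G (cball x \<rho> \<inter> S)"
      using minkowski_content_on_subset by blast
  qed
  then show ?thesis ..
qed

theorem lemma2p4:
  fixes S :: "'a::euclidean_space set" and d :: real
    and \<Lambda> :: "'i set" and SS :: "'i \<Rightarrow> 'a set"
  assumes "0 < d" and "d < real DIM('a)"
    and "\<exists>U C. open U \<and> closed C \<and> S = U \<inter> C"
    and "\<And>l. l \<in> \<Lambda> \<Longrightarrow> openin (top_of_set S) (SS l)"
    and "S = (\<Union>l\<in>\<Lambda>. SS l)"
    and "\<And>l. l \<in> \<Lambda> \<Longrightarrow> \<exists>M. minkowski_content_measure d (SS l) M"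
  shows "\<exists>M. minkowski_content_measure d S M"
proof -
  have S: "locally compact S"
    using assms(3) by (auto simp: locally_compact_closed_Int_open Int_commute)
  obtain M where M: "\<And>l. l \<in> \<Lambda> \<Longrightarrow> minkowski_content_measure d (SS l) (M l)"
    using assms(6) by metis
  obtain \<Lambda>' where "\<Lambda>' \<subseteq> \<Lambda>" "countable \<Lambda>'" "(\<Union>l\<in>\<Lambda>'. SS l) = (\<Union>l\<in>\<Lambda>. SS l)"
    by (rule countable_subfamily_openin_Union[OF assms(4)])
  with assms(4,5) M show ?thesis
    by (intro minkowski_content_measure_countable_Union[OF S, of \<Lambda>' SS]) auto
qed

end
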